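(* Let $d$ be a positive integer and $S$ any finite set of points in $\mathbb{R}^d$ (not necessarily in general position). Then the Radon partition graph $G_T[S,2]$ is connected.
   Context: A Radon partition of a finite set $S\subset\mathbb{R}^d$ is a partition of $S$ into two nonempty disjoint parts $P_1,P_2$ (unordered) with $\operatorname{conv}(P_1)\cap\operatorname{conv}(P_2)\neq\emptyset$. For two partitions $P,P'$ of $S$, the partition distance $D(P,P')$ is the minimum number of elements of $S$ that must be removed so that $P$ and $P'$ restricted to the remaining elements coincide. The Radon partition graph $G_T[S,2]$ has as vertices all Radon partitions of $S$, with an edge between $P$ and $P'$ if and only if $D(P,P')=1$. A graph with zero or one vertex is considered connected. *)

theory Defs
  imports "HOL-Analysis.Analysis"
begin

text \<open>A (2-part) partition is represented as the unordered set {P1, P2} of its parts.\<close>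

definition radon_partitions :: "'a::euclidean_space set \<Rightarrow> 'a set set set" where
  "radon_partitions S = {P. \<exists>A B. P = {A, B} \<and> A \<noteq> {} \<and> B \<noteq> {} \<and> A \<inter> B = {} \<and>
      A \<union> B = S \<and> convex hull A \<inter> convex hull B \<noteq> {}}"

definition restrict_partition :: "'a set set \<Rightarrow> 'a set \<Rightarrow> 'a set set" where
  "restrict_partition P T = ((\<lambda>B. B \<inter> T) ` P) - {{}}"

definition partition_distance :: "'a set \<Rightarrow> 'a set set \<Rightarrow> 'a set set \<Rightarrow> nat" where
  "partition_distance S P Q =
     (LEAST k. \<exists>X. X \<subseteq> S \<and> card X = k \<and>
        restrict_partition P (S - X) = restrict_partition Q (S - X))"

definition radon_edge :: "'a::euclidean_space set \<Rightarrow> 'a set set \<Rightarrow> 'a set set \<Rightarrow> bool" where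
  "radon_edge S P Q \<longleftrightarrow> P \<in> radon_partitions S \<and> Q \<in> radon_partitions S \<and>
     partition_distance S P Q = 1"

definition radon_graph_connected :: "'a::euclidean_space set \<Rightarrow> bool" where
  "radon_graph_connected S \<longleftrightarrow>
     (\<forall>P \<in> radon_partitions S. \<forall>Q \<in> radon_partitions S. (radon_edge S)\<^sup>*\<^sup>* P Q)"

end

(*
  A partition {A, S - A} is a Radon partition iff some nonzero affine dependence l of S
  (sum l S = 0 and sum of l x *R x = 0) is nonnegative on A and nonpositive off A.
  Given Radon partitions with dependences l and m, walk along the segment from l to m, or
  from l to -m (which describes the second partition with its parts swapped) should the
  first segment pass through 0. Every dependence on the segment is nonzero, so every
  partition compatible with it is Radon; and when the coefficient of a point changes sign,
  that point alone can be moved to the other side, which is an edge of the graph.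
*)

theory Submission
  imports Defs
begin

definition affine_dependence :: "'a::real_vector set \<Rightarrow> ('a \<Rightarrow> real) \<Rightarrow> bool" where
  "affine_dependence S l \<longleftrightarrow> sum l S = 0 \<and> (\<Sum>x\<in>S. l x *\<^sub>R x) = 0"

definition sign_compatible :: "'a set \<Rightarrow> 'a set \<Rightarrow> ('a \<Rightarrow> real) \<Rightarrow> bool" where
  "sign_compatible S A l \<longleftrightarrow> (\<forall>x\<in>S. if x \<in> A then 0 \<le> l x else l x \<le> 0)"

lemma affine_dependence_convex_combination:
  assumes "affine_dependence S l" "affine_dependence S m"
  shows "affine_dependence S (\<lambda>x. (1 - t) * l x + t * m x)"
  using assms
  by (simp add: affine_dependence_def sum.distrib scaleR_add_left
      flip: sum_distrib_left scaleR_sum_right scaleR_scaleR)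

lemma weighted_mean_in_convex_hull:
  fixes A :: "'a::real_vector set"
  assumes "finite A" "\<forall>x\<in>A. 0 \<le> w x" "0 < sum w A"
  shows "inverse (sum w A) *\<^sub>R (\<Sum>x\<in>A. w x *\<^sub>R x) \<in> convex hull A"
  unfolding convex_hull_finite[OF \<open>finite A\<close>]
proof (intro CollectI exI[of _ "\<lambda>x. w x / sum w A"] conjI)
  show "\<forall>x\<in>A. 0 \<le> w x / sum w A" using assms by simp
  show "(\<Sum>x\<in>A. w x / sum w A) = 1" using assms by (simp flip: sum_divide_distrib)
  show "(\<Sum>x\<in>A. (w x / sum w A) *\<^sub>R x) = inverse (sum w A) *\<^sub>R (\<Sum>x\<in>A. w x *\<^sub>R x)"
    by (simp add: scaleR_sum_right divide_inverse_commute)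
qed

lemma radon_partitions_altdef:
  "radon_partitions S = {{A, S - A} | A. A \<subseteq> S \<and> convex hull A \<inter> convex hull (S - A) \<noteq> {}}"
proof (intro set_eqI iffI)
  fix P assume "P \<in> radon_partitions S"
  then obtain A B where "P = {A, B}" "A \<inter> B = {}" "A \<union> B = S" "convex hull A \<inter> convex hull B \<noteq> {}"
    unfolding radon_partitions_def by blast
  moreover from this have "B = S - A" "A \<subseteq> S" by blast+
  ultimately show "P \<in> {{A, S - A} | A. A \<subseteq> S \<and> convex hull A \<inter> convex hull (S - A) \<noteq> {}}"
    by (intro CollectI exI[of _ A]) simp
next
  fix P assume "P \<in> {{A, S - A} | A. A \<subseteq> S \<and> convex hull A \<inter> convex hull (S - A) \<noteq> {}}"
  then obtain A where A: "P = {A, S - A}" "A \<subseteq> S" "convex hull A \<inter> convex hull (S - A) \<noteq> {}"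
    by blast
  have "A \<noteq> {}" using A(3) by (metis convex_hull_empty inf_bot_left)
  moreover have "S - A \<noteq> {}" using A(3) by (metis convex_hull_empty inf_bot_right)
  ultimately show "P \<in> radon_partitions S"
    unfolding radon_partitions_def mem_Collect_eq using A
    by (intro exI[of _ A] exI[of _ "S - A"]) (simp add: Un_absorb1)
qed

lemma convex_hulls_meet_imp_affine_dependence:
  fixes S :: "'a::real_vector set"
  assumes "finite S" "A \<subseteq> S" and p: "p \<in> convex hull A" "p \<in> convex hull (S - A)"
  obtains l where "affine_dependence S l" "\<exists>x\<in>S. l x \<noteq> 0" "sign_compatible S A l"
proof -
  have fin: "finite A" "finite (S - A)"
    using assms finite_subset by auto
  obtain u where u: "\<forall>x\<in>A. 0 \<le> u x" "sum u A = 1" "(\<Sum>x\<in>A. u x *\<^sub>R x) = p"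
    using p(1) unfolding convex_hull_finite[OF fin(1)] by blast
  obtain v where v: "\<forall>x\<in>S - A. 0 \<le> v x" "sum v (S - A) = 1" "(\<Sum>x\<in>S - A. v x *\<^sub>R x) = p"
    using p(2) unfolding convex_hull_finite[OF fin(2)] by blast
  define l where "l x = (if x \<in> A then u x else - v x)" for x
  have split: "sum f S = sum f (S - A) + sum f A" for f :: "'a \<Rightarrow> 'b::comm_monoid_add"
    using sum.subset_diff[OF assms(2,1)] .
  have "sum l A = 1" "sum l (S - A) = -1"
    using u v by (simp_all add: l_def sum_negf)
  moreover have "(\<Sum>x\<in>A. l x *\<^sub>R x) = p" "(\<Sum>x\<in>S - A. l x *\<^sub>R x) = - p"
    using u v by (simp_all add: l_def sum_negf)
  ultimately have "affine_dependence S l" "sum l A \<noteq> 0"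
    unfolding affine_dependence_def split[of l] split[of "\<lambda>x. l x *\<^sub>R x"] by simp_all
  moreover have "\<exists>x\<in>S. l x \<noteq> 0"
    using sum.not_neutral_contains_not_neutral[OF \<open>sum l A \<noteq> 0\<close>] assms(2) by blast
  moreover have "sign_compatible S A l"
    using u v by (auto simp: sign_compatible_def l_def)
  ultimately show ?thesis using that by blast
qed

lemma affine_dependence_imp_convex_hulls_meet:
  fixes S :: "'a::real_vector set"
  assumes "finite S" "A \<subseteq> S" "affine_dependence S l" "\<exists>x\<in>S. l x \<noteq> 0" "sign_compatible S A l"
  shows "convex hull A \<inter> convex hull (S - A) \<noteq> {}"
proof -
  have fin: "finite A" "finite (S - A)"
    using assms finite_subset by auto
  have nonneg: "\<forall>x\<in>A. 0 \<le> l x" "\<forall>x\<in>S - A. 0 \<le> - l x"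
    using assms(2,5) by (auto simp: sign_compatible_def)
  have split: "sum f S = sum f (S - A) + sum f A" for f :: "'a \<Rightarrow> 'b::comm_monoid_add"
    using sum.subset_diff[OF assms(2,1)] .
  define c where "c = sum l A"
  have c: "sum (\<lambda>x. - l x) (S - A) = c"
    using assms(3) split[of l] by (simp add: affine_dependence_def c_def sum_negf)
  have balance: "(\<Sum>x\<in>S - A. (- l x) *\<^sub>R x) = (\<Sum>x\<in>A. l x *\<^sub>R x)"
    using assms(3) split[of "\<lambda>x. l x *\<^sub>R x"]
    by (simp add: affine_dependence_def sum_negf neg_eq_iff_add_eq_0 add.commute)
  obtain x0 where x0: "x0 \<in> S" "l x0 \<noteq> 0" using assms(4) by blast
  have "0 < c"
  proof (cases "x0 \<in> A")
    case True
    then have "0 < l x0" using nonneg x0 by force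
    also have "l x0 \<le> c" unfolding c_def using fin nonneg True by (intro member_le_sum) auto
    finally show ?thesis .
  next
    case False
    then have "0 < - l x0" using nonneg x0 by force
    also have "- l x0 \<le> c" unfolding c[symmetric] using fin nonneg False x0
      by (intro member_le_sum) auto
    finally show ?thesis .
  qed
  then have "inverse c *\<^sub>R (\<Sum>x\<in>A. l x *\<^sub>R x) \<in> convex hull A \<inter> convex hull (S - A)"
    using weighted_mean_in_convex_hull[OF fin(1) nonneg(1), folded c_def]
      weighted_mean_in_convex_hull[OF fin(2) nonneg(2), unfolded c balance]
    by blast
  then show ?thesis by blast
qed

lemma radon_partitionE:
  fixes S :: "'a::euclidean_space set"
  assumes "finite S" "P \<in> radon_partitions S"
  obtains A l where "A \<subseteq> S" "P = {A, S - A}"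
    "affine_dependence S l" "\<exists>x\<in>S. l x \<noteq> 0" "sign_compatible S A l"
proof -
  obtain A where A: "A \<subseteq> S" "P = {A, S - A}" "convex hull A \<inter> convex hull (S - A) \<noteq> {}"
    using assms(2) unfolding radon_partitions_altdef by blast
  then obtain p where p: "p \<in> convex hull A" "p \<in> convex hull (S - A)"
    by blast
  obtain l where "affine_dependence S l" "\<exists>x\<in>S. l x \<noteq> 0" "sign_compatible S A l"
    using convex_hulls_meet_imp_affine_dependence[OF assms(1) A(1) p] .
  with A(1,2) show thesis by (rule that)
qed

lemma radon_partition_of_affine_dependence:
  fixes S :: "'a::euclidean_space set"
  assumes "finite S" "A \<subseteq> S" "affine_dependence S l" "\<exists>x\<in>S. l x \<noteq> 0" "sign_compatible S A l"
  shows "{A, S - A} \<in> radon_partitions S"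
  unfolding radon_partitions_altdef
  using assms(2) affine_dependence_imp_convex_hulls_meet[OF assms]
  by (intro CollectI exI[of _ A]) simp

lemma radon_partition_parts_nonempty: "P \<in> radon_partitions S \<Longrightarrow> {} \<notin> P"
  unfolding radon_partitions_def by auto

lemma partition_distance_eq_1:
  assumes "finite S" "x \<in> S"
    and "restrict_partition P S \<noteq> restrict_partition Q S"
    and "restrict_partition P (S - {x}) = restrict_partition Q (S - {x})"
  shows "partition_distance S P Q = 1"
  unfolding partition_distance_def
proof (rule Least_equality)
  show "\<exists>X\<subseteq>S. card X = 1 \<and> restrict_partition P (S - X) = restrict_partition Q (S - X)"
    using assms by (intro exI[of _ "{x}"]) auto
next
  fix k assume "\<exists>X\<subseteq>S. card X = k \<and> restrict_partition P (S - X) = restrict_partition Q (S - X)"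
  then obtain X where "X \<subseteq> S" "card X = k" "restrict_partition P (S - X) = restrict_partition Q (S - X)"
    by blast
  with assms have "X \<noteq> {}" by auto
  moreover have "finite X" using \<open>X \<subseteq> S\<close> \<open>finite S\<close> by (rule finite_subset)
  ultimately have "0 < card X" by (simp add: card_gt_0_iff)
  with \<open>card X = k\<close> show "1 \<le> k" by simp
qed

lemma restrict_partition_complements:
  assumes "A \<subseteq> S"
  shows "restrict_partition {A, S - A} T = {A \<inter> T, (S \<inter> T) - (A \<inter> T)} - {{}}"
proof -
  have "(S - A) \<inter> T = (S \<inter> T) - (A \<inter> T)" by blast
  then show ?thesis unfolding restrict_partition_def by simp
qed

lemma radon_edge_if_differ_at_one_point:
  fixes S :: "'a::euclidean_space set"
  assumes "finite S" "A \<subseteq> S" "A' \<subseteq> S" "A \<noteq> A'" "A - {x} = A' - {x}"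
    and radon: "{A, S - A} \<in> radon_partitions S" "{A', S - A'} \<in> radon_partitions S"
  shows "radon_edge S {A, S - A} {A', S - A'}"
proof -
  have "x \<in> S" using assms(2-5) by blast
  have nonempty: "A \<noteq> {}" "S - A \<noteq> {}" "A' \<noteq> {}" "S - A' \<noteq> {}"
    using radon_partition_parts_nonempty[OF radon(1)] radon_partition_parts_nonempty[OF radon(2)]
    by auto
  have "{A, S - A} \<noteq> {A', S - A'}"
  proof
    assume "{A, S - A} = {A', S - A'}"
    with \<open>A \<noteq> A'\<close> have "A = S - A'" by (metis doubleton_eq_iff)
    with assms(3,5) have "A \<subseteq> {x}" "A' \<subseteq> {x}" by blast+
    with nonempty \<open>A \<noteq> A'\<close> show False by blast
  qed
  then have "restrict_partition {A, S - A} S \<noteq> restrict_partition {A', S - A'} S"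
    using assms(2,3) nonempty by (simp add: restrict_partition_complements Int_absorb2)
  moreover have "restrict_partition {A, S - A} (S - {x}) = restrict_partition {A', S - A'} (S - {x})"
  proof -
    have "B \<inter> (S - {x}) = B - {x}" if "B \<subseteq> S" for B using that by blast
    then show ?thesis using assms(2,3,5) by (simp add: restrict_partition_complements)
  qed
  ultimately show ?thesis
    unfolding radon_edge_def using radon partition_distance_eq_1[OF \<open>finite S\<close> \<open>x \<in> S\<close>] by blast
qed

lemma sign_compatible_change_at_zero:
  assumes "sign_compatible S A w" "w i = 0" "A' - {i} = A - {i}"
  shows "sign_compatible S A' w"
  unfolding sign_compatible_def
proof
  fix x assume "x \<in> S"
  show "if x \<in> A' then 0 \<le> w x else w x \<le> 0"
  proof (cases "x = i")
    case True
    with assms(2) show ?thesis by simp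
  next
    case False
    with assms(3) have "x \<in> A' \<longleftrightarrow> x \<in> A" by blast
    with assms(1) \<open>x \<in> S\<close> show ?thesis by (simp add: sign_compatible_def)
  qed
qed

(* For a = b = 0 the crossing time a / (a - b) is 0 / 0 = 0. *)
lemma zero_crossing_of_segment:
  fixes a b :: real
  assumes "0 \<le> a" "b \<le> 0"
  shows "a / (a - b) \<in> {0..1}" "(1 - a / (a - b)) * a + a / (a - b) * b = 0"
    and "0 \<le> t \<Longrightarrow> t \<le> a / (a - b) \<Longrightarrow> 0 \<le> (1 - t) * a + t * b"
proof -
  show "a / (a - b) \<in> {0..1}"
    using assms by (cases "a = b") (auto simp: divide_le_eq)
  show "(1 - a / (a - b)) * a + a / (a - b) * b = 0"
    using assms by (cases "a = b") (auto simp: field_simps)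
  assume "0 \<le> t" "t \<le> a / (a - b)"
  show "0 \<le> (1 - t) * a + t * b"
  proof (cases "a = b")
    case True
    with assms show ?thesis by simp
  next
    case False
    with assms have "0 < a - b" by simp
    with \<open>t \<le> a / (a - b)\<close> have "t * (a - b) \<le> a" by (simp add: le_divide_eq)
    then show ?thesis by (simp add: algebra_simps)
  qed
qed

lemma sign_compatible_move_towards:
  fixes u v :: "'a \<Rightarrow> real"
  assumes "finite S" "A \<subseteq> S" "B \<subseteq> S" "A \<noteq> B"
    and compat: "sign_compatible S A u" "sign_compatible S B v"
  obtains i s where "i \<in> sym_diff A B" "s \<in> {0..1}"
    "sign_compatible S ((A - {i}) \<union> (B \<inter> {i})) (\<lambda>x. (1 - s) * u x + s * v x)"
proof -
  define D where "D = sym_diff A B"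
  \<comment> \<open>Orient u and v so that A is the nonnegative side; the segment from a x to b x
    reaches 0 at time \<tau> x, and i is the first point of D to do so.\<close>
  define a where "a x = (if x \<in> A then u x else - u x)" for x
  define b where "b x = (if x \<in> A then v x else - v x)" for x
  define \<tau> where "\<tau> x = a x / (a x - b x)" for x
  have a: "0 \<le> a x" if "x \<in> S" for x
    using compat(1) that by (auto simp: sign_compatible_def a_def)
  have "finite D" "D \<noteq> {}" "D \<subseteq> S"
    using assms(1-4) finite_subset unfolding D_def by blast+
  have b: "b x \<le> 0" if "x \<in> D" for x
    using compat(2) that \<open>D \<subseteq> S\<close> by (auto simp: sign_compatible_def b_def D_def)
  have b': "0 \<le> b x" if "x \<in> S - D" for x
    using compat(2) that by (auto simp: sign_compatible_def b_def D_def)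
  define i where "i = arg_min_on \<tau> D"
  have i: "i \<in> D" "\<forall>x\<in>D. \<tau> i \<le> \<tau> x"
    using arg_min_if_finite[OF \<open>finite D\<close> \<open>D \<noteq> {}\<close>, of \<tau>] unfolding i_def by (auto simp: not_less)
  define s where "s = \<tau> i"
  have "0 \<le> a i" "b i \<le> 0"
    using a b i(1) \<open>D \<subseteq> S\<close> by auto
  note crossing = zero_crossing_of_segment(1,2)[OF this, folded \<tau>_def s_def]
  have before_crossing: "0 \<le> (1 - s) * a x + s * b x" if "x \<in> S" for x
  proof (cases "x \<in> D")
    case True
    then show ?thesis
      using zero_crossing_of_segment(3)[OF a[OF that] b[OF True], folded \<tau>_def] i crossing(1)
      unfolding s_def by auto
  next
    case False
    then show ?thesis
      using a[OF that] b'[of x] crossing(1) that by (auto intro!: add_nonneg_nonneg mult_nonneg_nonneg)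
  qed
  have "if x \<in> A then 0 \<le> (1 - s) * u x + s * v x else (1 - s) * u x + s * v x \<le> 0"
    if "x \<in> S" for x
    using before_crossing[OF that] by (cases "x \<in> A") (auto simp: a_def b_def)
  then have "sign_compatible S A (\<lambda>x. (1 - s) * u x + s * v x)"
    by (simp add: sign_compatible_def)
  moreover have "(1 - s) * u i + s * v i = 0"
    using crossing(2) unfolding a_def b_def by (auto split: if_splits)
  ultimately have "sign_compatible S ((A - {i}) \<union> (B \<inter> {i})) (\<lambda>x. (1 - s) * u x + s * v x)"
    by (rule sign_compatible_change_at_zero) blast
  with i(1) crossing(1) show thesis
    unfolding D_def by (rule that)
qed

lemma radon_path_along_segment:
  fixes S :: "'a::euclidean_space set"
  assumes "finite S" "B \<subseteq> S" "affine_dependence S l" "affine_dependence S m"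
    and "sign_compatible S B m"
    and nonvanishing: "\<forall>t\<in>{0..1}. \<exists>x\<in>S. (1 - t) * l x + t * m x \<noteq> 0"
    and "A \<subseteq> S" "t \<in> {0..1}" "sign_compatible S A (\<lambda>x. (1 - t) * l x + t * m x)"
  shows "(radon_edge S)\<^sup>*\<^sup>* {A, S - A} {B, S - B}"
  using assms(7-9)
proof (induction "card (sym_diff A B)" arbitrary: A t rule: less_induct)
  case less
  show ?case
  proof (cases "A = B")
    case True
    then show ?thesis by simp
  next
    case False
    obtain i s where i: "i \<in> sym_diff A B" and s: "s \<in> {0..1}"
      and compat: "sign_compatible S ((A - {i}) \<union> (B \<inter> {i}))
                     (\<lambda>x. (1 - s) * ((1 - t) * l x + t * m x) + s * m x)"
      using sign_compatible_move_towards[OF \<open>finite S\<close> less.prems(1) \<open>B \<subseteq> S\<close> False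
          less.prems(3) \<open>sign_compatible S B m\<close>] .
    define A' where "A' = (A - {i}) \<union> (B \<inter> {i})"
    define r where "r = (1 - s) * t + s"
    have "(1 - s) * t \<le> 1 - s"
      using s less.prems(2) by (simp add: mult_left_le)
    then have "r \<in> {0..1}"
      using s less.prems(2) by (simp add: r_def)
    have compat': "sign_compatible S A' (\<lambda>x. (1 - r) * l x + r * m x)"
      using compat unfolding A'_def r_def by (simp add: algebra_simps)
    have "A' \<subseteq> S" "A \<noteq> A'" "A - {i} = A' - {i}"
      using less.prems(1) \<open>B \<subseteq> S\<close> i unfolding A'_def by auto
    have radon: "{A, S - A} \<in> radon_partitions S" "{A', S - A'} \<in> radon_partitions S"
      using radon_partition_of_affine_dependence[OF \<open>finite S\<close> less.prems(1)
          affine_dependence_convex_combination[OF assms(3,4)] nonvanishing[rule_format, OF less.prems(2)]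
          less.prems(3)]
        radon_partition_of_affine_dependence[OF \<open>finite S\<close> \<open>A' \<subseteq> S\<close>
          affine_dependence_convex_combination[OF assms(3,4)] nonvanishing[rule_format, OF \<open>r \<in> {0..1}\<close>]
          compat'] .
    have "sym_diff A' B = sym_diff A B - {i}"
      unfolding A'_def by blast
    moreover have "finite (sym_diff A B)"
      using \<open>finite S\<close> less.prems(1) \<open>B \<subseteq> S\<close> finite_subset by blast
    ultimately have "card (sym_diff A' B) < card (sym_diff A B)"
      using i by (simp only: card_Diff1_less)
    then have "(radon_edge S)\<^sup>*\<^sup>* {A', S - A'} {B, S - B}"
      using less.hyps \<open>A' \<subseteq> S\<close> \<open>r \<in> {0..1}\<close> compat' by blast
    with radon_edge_if_differ_at_one_point[OF \<open>finite S\<close> less.prems(1) \<open>A' \<subseteq> S\<close> \<open>A \<noteq> A'\<close>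
        \<open>A - {i} = A' - {i}\<close> radon]
    show ?thesis by (rule converse_rtranclp_into_rtranclp)
  qed
qed

lemma segment_nonvanishing_or_reflected:
  fixes l m :: "'a \<Rightarrow> real"
  assumes "\<exists>x\<in>S. l x \<noteq> 0" "\<exists>x\<in>S. m x \<noteq> 0"
  shows "(\<forall>t\<in>{0..1}. \<exists>x\<in>S. (1 - t) * l x + t * m x \<noteq> 0) \<or>
         (\<forall>t\<in>{0..1}. \<exists>x\<in>S. (1 - t) * l x + t * - m x \<noteq> 0)"
proof (rule ccontr)
  assume "\<not> ?thesis"
  then obtain t s where ts: "t \<in> {0..1}" "s \<in> {0..1}"
    and vanish: "\<forall>x\<in>S. (1 - t) * l x + t * m x = 0" "\<forall>x\<in>S. (1 - s) * l x - s * m x = 0"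
    by auto
  obtain x0 where x0: "x0 \<in> S" "l x0 \<noteq> 0" using assms(1) by blast
  obtain x1 where x1: "x1 \<in> S" "m x1 \<noteq> 0" using assms(2) by blast
  have "t \<noteq> 0" "s \<noteq> 0" using vanish x0 by auto
  moreover have "t \<noteq> 1" "s \<noteq> 1" using vanish x1 by auto
  ultimately have "0 < s * (1 - t) + t * (1 - s)"
    using ts by (simp add: add_pos_pos)
  moreover have "(s * (1 - t) + t * (1 - s)) * l x0 = 0"
  proof -
    have "s * ((1 - t) * l x0 + t * m x0) + t * ((1 - s) * l x0 - s * m x0) = 0"
      using vanish x0(1) by simp
    then show ?thesis by (simp add: algebra_simps)
  qed
  ultimately show False using x0(2) by simp
qed

lemma radon_path_between_sign_compatible:
  fixes S :: "'a::euclidean_space set"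
  assumes "finite S" "A \<subseteq> S" "C \<subseteq> S"
    and l: "affine_dependence S l" "\<exists>x\<in>S. l x \<noteq> 0" "sign_compatible S A l"
    and m: "affine_dependence S m" "\<exists>x\<in>S. m x \<noteq> 0" "sign_compatible S C m"
  shows "(radon_edge S)\<^sup>*\<^sup>* {A, S - A} {C, S - C}"
proof -
  have start: "sign_compatible S A (\<lambda>x. (1 - 0) * l x + 0 * m' x)" for m'
    using l(3) by simp
  from segment_nonvanishing_or_reflected[OF l(2) m(2)] show ?thesis
  proof
    assume "\<forall>t\<in>{0..1}. \<exists>x\<in>S. (1 - t) * l x + t * m x \<noteq> 0"
    from radon_path_along_segment[OF assms(1,3) l(1) m(1) m(3) this assms(2) _ start]
    show ?thesis by simp
  next
    assume nonvanishing: "\<forall>t\<in>{0..1}. \<exists>x\<in>S. (1 - t) * l x + t * - m x \<noteq> 0"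
    have "affine_dependence S (\<lambda>x. - m x)" "sign_compatible S (S - C) (\<lambda>x. - m x)"
      using m(1,3) by (auto simp: affine_dependence_def sign_compatible_def sum_negf)
    from radon_path_along_segment[OF assms(1) Diff_subset l(1) this nonvanishing assms(2) _ start]
    have "(radon_edge S)\<^sup>*\<^sup>* {A, S - A} {S - C, S - (S - C)}"
      by simp
    moreover have "{S - C, S - (S - C)} = {C, S - C}"
      using assms(3) by (simp add: double_diff insert_commute)
    ultimately show ?thesis by simp
  qed
qed

theorem theorem4p1:
  fixes S :: "'a::euclidean_space set"
  assumes "finite S"
  shows "radon_graph_connected S"
  unfolding radon_graph_connected_def
proof (intro ballI)
  fix P Q assume "P \<in> radon_partitions S" "Q \<in> radon_partitions S"
  obtain A l where "A \<subseteq> S" "P = {A, S - A}"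
    "affine_dependence S l" "\<exists>x\<in>S. l x \<noteq> 0" "sign_compatible S A l"
    using radon_partitionE[OF assms \<open>P \<in> radon_partitions S\<close>] .
  moreover obtain C m where "C \<subseteq> S" "Q = {C, S - C}"
    "affine_dependence S m" "\<exists>x\<in>S. m x \<noteq> 0" "sign_compatible S C m"
    using radon_partitionE[OF assms \<open>Q \<in> radon_partitions S\<close>] .
  ultimately show "(radon_edge S)\<^sup>*\<^sup>* P Q"
    using radon_path_between_sign_compatible[OF assms] by simp
qed

end
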